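(* Let $m\ge1$, $n=2^m-1$, and let $\iota,\kappa\in\dot F^m$ be such that the Hamming distances $d(\iota,0^m)$, $d(\kappa,0^m)$ and $d(\iota,\kappa)$ are all at least $3$. Then the sets $R_\iota+\hat\iota+\bar e^{(\iota)}$ and $R_\kappa+\hat\kappa+\bar e^{(\kappa)}$ are disjoint, and neither of them contains $0^n$.
   Context: $F^m$ denotes the vector space of binary $m$-tuples over $GF(2)$, and $\dot F^m := F^m\setminus\{0^m\}$. Let $\pi^{(1)}=(10\ldots0),\ldots,\pi^{(m)}=(0\ldots01)$ be the standard basis of $F^m$. The coordinates of words $\bar w\in F^n$ ($n=2^m-1$) are indexed by the elements of $\dot F^m$, $\bar w=\{w_\alpha\}_{\alpha\in\dot F^m}$, where the first $m$ coordinates have indices $\pi^{(1)},\ldots,\pi^{(m)}$ (in this order) and the remaining $n-m$ indices are in some fixed order. $\bar e^{(\iota)}\in F^n$ is the word with a single $1$ in the coordinate indexed by $\iota$. For $\alpha\in F^m$, $\hat\alpha := (\alpha,0^{n-m})\in F^n$, i.e. $\hat\alpha=\sum_{i=1}^m \alpha_i \bar e^{(\pi^{(i)})}$. The Hamming code is $H:=\{\bar c\in F^n \mid \sum_{\alpha\in\dot F^m} c_\alpha\alpha = 0^m\}$. For $\iota\in\dot F^m$, $R_\iota := \{\bar c\in H \mid c_\alpha=c_{\alpha+\iota} \text{ for all } \alpha\in F^m\setminus\{0^m,\iota\}\}$. $d(\cdot,\cdot)$ is the Hamming distance. *)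

theory Defs
  imports Main "HOL-Library.Z2"
begin

text \<open>Binary m-tuples: functions nat => bit supported on {0..<m}.
  Words of F^n (n = 2^m - 1): functions from m-tuples to bit, supported on the
  nonzero m-tuples (coordinates indexed by the elements of dot F^m).\<close>

type_synonym vec = "nat \<Rightarrow> bit"
type_synonym word = "vec \<Rightarrow> bit"

definition zvec :: vec where "zvec = (\<lambda>_. 0)"

definition Fm :: "nat \<Rightarrow> vec set" where
  "Fm m = {a. \<forall>i. m \<le> i \<longrightarrow> a i = 0}"

definition Fdot :: "nat \<Rightarrow> vec set" where
  "Fdot m = Fm m - {zvec}"

definition vadd :: "vec \<Rightarrow> vec \<Rightarrow> vec" where
  "vadd a b = (\<lambda>i. a i + b i)"

definition Words :: "nat \<Rightarrow> word set" where
  "Words m = {w. \<forall>\<alpha>. \<alpha> \<notin> Fdot m \<longrightarrow> w \<alpha> = 0}"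

definition zword :: word where "zword = (\<lambda>_. 0)"

definition wadd :: "word \<Rightarrow> word \<Rightarrow> word" where
  "wadd v w = (\<lambda>\<alpha>. v \<alpha> + w \<alpha>)"

text \<open>standard basis vector pi^(i) (0-based index i < m)\<close>
definition basis :: "nat \<Rightarrow> vec" where
  "basis i = (\<lambda>j. if j = i then 1 else 0)"

definition ew :: "nat \<Rightarrow> vec \<Rightarrow> word" where
  "ew m \<iota> = (\<lambda>\<beta>. if \<beta> = \<iota> \<and> \<beta> \<in> Fdot m then 1 else 0)"

definition hat :: "nat \<Rightarrow> vec \<Rightarrow> word" where
  "hat m \<alpha> = (\<lambda>\<beta>. \<Sum>i<m. \<alpha> i * ew m (basis i) \<beta>)"

definition Hamming :: "nat \<Rightarrow> word set" where
  "Hamming m = {c \<in> Words m. (\<lambda>i. \<Sum>\<alpha>\<in>Fdot m. c \<alpha> * \<alpha> i) = zvec}"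

definition Rset :: "nat \<Rightarrow> vec \<Rightarrow> word set" where
  "Rset m \<iota> = {c \<in> Hamming m. \<forall>\<alpha> \<in> Fm m - {zvec, \<iota>}. c \<alpha> = c (vadd \<alpha> \<iota>)}"

definition hdist :: "nat \<Rightarrow> vec \<Rightarrow> vec \<Rightarrow> nat" where
  "hdist m a b = card {i. i < m \<and> a i \<noteq> b i}"

definition shiftedR :: "nat \<Rightarrow> vec \<Rightarrow> word set" where
  "shiftedR m \<iota> = (\<lambda>c. wadd (wadd c (hat m \<iota>)) (ew m \<iota>)) ` Rset m \<iota>"

end

theory Submission
  imports Defs
begin

text \<open>Let W = c + \<iota>^ + e^(\<iota>) with c \<in> R_\<iota>. Since c is constant on every pair
  {\<alpha>, \<alpha> + \<iota>} other than {0, \<iota>} and \<iota>^ is supported on the basis vectors, W_\<alpha> = W_(\<alpha>+\<iota>)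
  whenever \<alpha> and \<alpha> + \<iota> both have weight at least 2, while W_\<pi> + W_(\<pi>+\<iota>) = \<iota>_i for
  \<pi> = \<pi>^(i). The latter excludes W = 0. If W also lies in the set for \<kappa>, choose i with
  \<iota>_i \<noteq> \<kappa>_i; then \<iota>_i = W_\<pi> + W_(\<pi>+\<iota>) = W_\<pi> + W_(\<pi>+\<iota>+\<kappa>) = W_\<pi> + W_(\<pi>+\<kappa>) = \<kappa>_i,
  the distance hypotheses supplying the weights needed.\<close>

lemma hdist_commute: "hdist m a b = hdist m b a"
  unfolding hdist_def by metis

lemma hdist_eq_0_iff: "hdist m a b = 0 \<longleftrightarrow> (\<forall>i<m. a i = b i)"
  unfolding hdist_def by auto

lemma hdist_triangle: "hdist m a c \<le> hdist m a b + hdist m b c"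
proof -
  have "hdist m a c \<le> card ({i. i < m \<and> a i \<noteq> b i} \<union> {i. i < m \<and> b i \<noteq> c i})"
    unfolding hdist_def by (intro card_mono) auto
  also have "\<dots> \<le> hdist m a b + hdist m b c"
    unfolding hdist_def by (rule card_Un_le)
  finally show ?thesis .
qed

lemma hdist_vadd_zvec: "hdist m (vadd a b) zvec = hdist m a b"
proof -
  have "{i. i < m \<and> vadd a b i \<noteq> zvec i} = {i. i < m \<and> a i \<noteq> b i}"
  proof (intro Collect_cong conj_cong refl)
    fix i
    show "vadd a b i \<noteq> zvec i \<longleftrightarrow> a i \<noteq> b i"
      unfolding vadd_def zvec_def by (cases "a i"; cases "b i") simp_all
  qed
  then show ?thesis
    unfolding hdist_def by simp
qed

lemma hdist_basis_zvec: "hdist m (basis i) zvec \<le> 1"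
proof -
  have "hdist m (basis i) zvec \<le> card {i}"
    unfolding hdist_def basis_def zvec_def by (intro card_mono) auto
  then show ?thesis by simp
qed

lemma vadd_vadd_cancel: "vadd (vadd a b) b = a"
  unfolding vadd_def by (simp add: add.assoc del: add_bit_eq_xor)

lemma vadd_self: "vadd a a = zvec"
  unfolding vadd_def zvec_def by simp

lemma vadd_left_commute: "vadd (vadd a b) c = vadd (vadd a c) b"
  unfolding vadd_def by (simp add: ac_simps del: add_bit_eq_xor)

lemma hdist_le_Suc_hdist_vadd_basis: "hdist m a b \<le> Suc (hdist m (vadd (basis i) a) b)"
proof -
  have "hdist m a (vadd (basis i) a) = hdist m (basis i) zvec"
    using hdist_vadd_zvec[of m "vadd (basis i) a" a] hdist_commute[of m a]
    by (simp add: vadd_vadd_cancel)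
  then show ?thesis
    using hdist_triangle[of m a b "vadd (basis i) a"] hdist_basis_zvec[of m i] by linarith
qed

lemma vadd_in_Fm: "a \<in> Fm m \<Longrightarrow> b \<in> Fm m \<Longrightarrow> vadd a b \<in> Fm m"
  unfolding Fm_def vadd_def by auto

lemma basis_in_Fdot: "i < m \<Longrightarrow> basis i \<in> Fdot m"
  unfolding Fdot_def Fm_def basis_def zvec_def by (auto dest: fun_cong[where x = i])

lemma basis_inject: "basis i = basis j \<Longrightarrow> i = j"
  unfolding basis_def by (metis one_neq_zero)

lemma hat_basis:
  assumes "i < m"
  shows "hat m v (basis i) = v i"
proof -
  have "hat m v (basis i) = (\<Sum>j<m. if j = i then v i else 0)"
    unfolding hat_def ew_def using basis_inject basis_in_Fdot[OF assms] by (intro sum.cong) auto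
  then show ?thesis
    using assms by simp
qed

lemma hat_eq_0:
  assumes "2 \<le> hdist m \<alpha> zvec"
  shows "hat m v \<alpha> = 0"
proof -
  have "\<alpha> \<noteq> basis i" for i
    using assms hdist_basis_zvec[of m i] by auto
  then show ?thesis
    unfolding hat_def ew_def by simp
qed

lemma shiftedR_pair_sum:
  assumes "W \<in> shiftedR m \<iota>" and "\<alpha> \<in> Fm m" "\<alpha> \<noteq> zvec" "\<alpha> \<noteq> \<iota>"
  shows "W \<alpha> + W (vadd \<alpha> \<iota>) = hat m \<iota> \<alpha> + hat m \<iota> (vadd \<alpha> \<iota>)"
proof -
  obtain c where c: "c \<in> Rset m \<iota>" and W: "W = wadd (wadd c (hat m \<iota>)) (ew m \<iota>)"
    using assms(1) unfolding shiftedR_def by blast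
  have "c \<alpha> = c (vadd \<alpha> \<iota>)"
    using c assms(2-4) unfolding Rset_def by auto
  moreover have "vadd \<alpha> \<iota> \<noteq> \<iota>"
  proof
    assume "vadd \<alpha> \<iota> = \<iota>"
    then have "\<alpha> = vadd \<iota> \<iota>"
      using vadd_vadd_cancel[of \<alpha> \<iota>] by simp
    then show False
      using assms(3) by (simp add: vadd_self)
  qed
  ultimately show ?thesis
    using assms(4) unfolding W wadd_def ew_def
    by (cases "c \<alpha>"; cases "hat m \<iota> \<alpha>"; cases "hat m \<iota> (vadd \<alpha> \<iota>)") simp_all
qed

lemma shiftedR_pair_eq:
  assumes "W \<in> shiftedR m \<iota>" and "\<alpha> \<in> Fm m"
    and "2 \<le> hdist m \<alpha> zvec" and "2 \<le> hdist m \<alpha> \<iota>"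
  shows "W \<alpha> = W (vadd \<alpha> \<iota>)"
proof -
  have "\<alpha> \<noteq> zvec" "\<alpha> \<noteq> \<iota>"
    using assms(3,4) hdist_eq_0_iff[of m \<alpha> \<alpha>] by auto
  moreover have "hat m \<iota> \<alpha> = 0" "hat m \<iota> (vadd \<alpha> \<iota>) = 0"
    using assms(3,4) by (simp_all add: hat_eq_0 hdist_vadd_zvec)
  ultimately have "W \<alpha> + W (vadd \<alpha> \<iota>) = 0"
    using shiftedR_pair_sum[OF assms(1,2)] by simp
  then show ?thesis
    by (cases "W \<alpha>"; cases "W (vadd \<alpha> \<iota>)") simp_all
qed

lemma shiftedR_basis_pair:
  assumes "W \<in> shiftedR m \<iota>" and "i < m" and "3 \<le> hdist m \<iota> zvec"
  shows "W (basis i) + W (vadd (basis i) \<iota>) = \<iota> i"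
proof -
  have "basis i \<in> Fm m" "basis i \<noteq> zvec"
    using basis_in_Fdot[OF assms(2)] unfolding Fdot_def by auto
  moreover have "basis i \<noteq> \<iota>"
    using hdist_basis_zvec[of m i] assms(3) by auto
  moreover have "2 \<le> hdist m (vadd (basis i) \<iota>) zvec"
    using hdist_le_Suc_hdist_vadd_basis[of m \<iota> zvec i] assms(3) by linarith
  ultimately show ?thesis
    using shiftedR_pair_sum[OF assms(1)] by (simp add: hat_basis[OF assms(2)] hat_eq_0)
qed

lemma zword_notin_shiftedR:
  assumes "3 \<le> hdist m \<iota> zvec"
  shows "zword \<notin> shiftedR m \<iota>"
proof
  assume zword: "zword \<in> shiftedR m \<iota>"
  obtain i where "i < m" and "\<iota> i \<noteq> zvec i"
    using assms hdist_eq_0_iff[of m \<iota> zvec] by fastforce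
  then show False
    using shiftedR_basis_pair[OF zword _ assms, of i] by (simp add: zword_def zvec_def)
qed

lemma shiftedR_disjoint:
  assumes "\<iota> \<in> Fm m" and "\<kappa> \<in> Fm m"
    and \<iota>: "3 \<le> hdist m \<iota> zvec" and \<kappa>: "3 \<le> hdist m \<kappa> zvec"
    and \<iota>\<kappa>: "3 \<le> hdist m \<iota> \<kappa>"
  shows "shiftedR m \<iota> \<inter> shiftedR m \<kappa> = {}"
proof (intro equals0I)
  fix W
  assume "W \<in> shiftedR m \<iota> \<inter> shiftedR m \<kappa>"
  then have W\<iota>: "W \<in> shiftedR m \<iota>" and W\<kappa>: "W \<in> shiftedR m \<kappa>"
    by auto
  obtain i where i: "i < m" and "\<iota> i \<noteq> \<kappa> i"
    using \<iota>\<kappa> hdist_eq_0_iff[of m \<iota> \<kappa>] by fastforce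
  define \<pi> where "\<pi> = basis i"
  have "\<pi> \<in> Fm m"
    using basis_in_Fdot[OF i] unfolding \<pi>_def Fdot_def by auto
  have "\<iota> i = W \<pi> + W (vadd \<pi> \<iota>)"
    using shiftedR_basis_pair[OF W\<iota> i \<iota>] unfolding \<pi>_def by simp
  also have "W (vadd \<pi> \<iota>) = W (vadd (vadd \<pi> \<iota>) \<kappa>)"
  proof (rule shiftedR_pair_eq[OF W\<kappa>])
    show "vadd \<pi> \<iota> \<in> Fm m"
      using \<open>\<pi> \<in> Fm m\<close> assms(1) by (rule vadd_in_Fm)
    show "2 \<le> hdist m (vadd \<pi> \<iota>) zvec" "2 \<le> hdist m (vadd \<pi> \<iota>) \<kappa>"
      using hdist_le_Suc_hdist_vadd_basis[of m \<iota> zvec i]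
        hdist_le_Suc_hdist_vadd_basis[of m \<iota> \<kappa> i] \<iota> \<iota>\<kappa>
      unfolding \<pi>_def by linarith+
  qed
  also have "vadd (vadd \<pi> \<iota>) \<kappa> = vadd (vadd \<pi> \<kappa>) \<iota>"
    by (rule vadd_left_commute)
  also have "W (vadd (vadd \<pi> \<kappa>) \<iota>) = W (vadd \<pi> \<kappa>)"
  proof (rule shiftedR_pair_eq[OF W\<iota>, symmetric])
    show "vadd \<pi> \<kappa> \<in> Fm m"
      using \<open>\<pi> \<in> Fm m\<close> assms(2) by (rule vadd_in_Fm)
    show "2 \<le> hdist m (vadd \<pi> \<kappa>) zvec" "2 \<le> hdist m (vadd \<pi> \<kappa>) \<iota>"
      using hdist_le_Suc_hdist_vadd_basis[of m \<kappa> zvec i]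
        hdist_le_Suc_hdist_vadd_basis[of m \<kappa> \<iota> i] \<kappa> \<iota>\<kappa> hdist_commute[of m \<iota> \<kappa>]
      unfolding \<pi>_def by linarith+
  qed
  also have "W \<pi> + W (vadd \<pi> \<kappa>) = \<kappa> i"
    using shiftedR_basis_pair[OF W\<kappa> i \<kappa>] unfolding \<pi>_def by simp
  finally show False
    using \<open>\<iota> i \<noteq> \<kappa> i\<close> by simp
qed

theorem lemma3:
  fixes m :: nat and \<iota> \<kappa> :: vec
  assumes "m \<ge> 1"
    and "\<iota> \<in> Fdot m" and "\<kappa> \<in> Fdot m"
    and "hdist m \<iota> zvec \<ge> 3" and "hdist m \<kappa> zvec \<ge> 3" and "hdist m \<iota> \<kappa> \<ge> 3"
  shows "shiftedR m \<iota> \<inter> shiftedR m \<kappa> = {} \<and> zword \<notin> shiftedR m \<iota> \<and> zword \<notin> shiftedR m \<kappa>"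
proof -
  have "\<iota> \<in> Fm m" "\<kappa> \<in> Fm m"
    using assms(2,3) unfolding Fdot_def by auto
  then show ?thesis
    using assms(4-6) by (simp add: shiftedR_disjoint zword_notin_shiftedR)
qed

end
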